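(* Let $k$ be a Calder\'on--Zygmund kernel of order $m$ on a closed set $X\subset\mathbb{R}^d$ with constants $C_{CZ},\tau$, $\mu$ a finite measure supported in $X$, and $T$ a bounded operator on $L^2(\mathbb{R}^d;\mu)$ with $Tf(x)=\int k(x,y)f(y)\,d\mu(y)$ for $x\notin\operatorname{supp}f$. Let $\alpha=\frac{\tau}{2(\tau+m)}$. Let $Q,R$ be cubes in $\mathbb{R}^d$ with $\ell(Q)\le\ell(R)$, and $\varphi_Q,\psi_R\in L^2(\mathbb{R}^d;\mu)$ with $\varphi_Q=0$ outside $Q$, $\psi_R=0$ outside $R$, $\int\varphi_Q\,d\mu=0$, and $\operatorname{dist}(Q,\operatorname{supp}\psi_R)\ge\ell(Q)^\alpha\ell(R)^{1-\alpha}$. Then $$\Big|\int\varphi_Q\,T\psi_R\,d\mu\Big|\le C\frac{\ell(Q)^{\tau/2}\ell(R)^{\tau/2}}{D(Q,R)^{m+\tau}}\sqrt{\mu(Q)}\sqrt{\mu(R)}\,\|\varphi_Q\|_{L^2(\mu)}\|\psi_R\|_{L^2(\mu)},$$ where $D(Q,R)=\ell(Q)+\ell(R)+\operatorname{dist}(Q,R)$ and $C$ depends only on $C_{CZ},\tau,m,d$.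
   Context: A Calder\'on--Zygmund kernel of order $m$ on $X$ with constants $C_{CZ},\tau\in(0,1]$: $|k(x,y)|\le C_{CZ}|x-y|^{-m}$ and $|k(y,x)-k(y,x')|+|k(x,y)-k(x',y)|\le C_{CZ}|x-x'|^\tau/|x-y|^{m+\tau}$ for $x,x',y\in X$ with $|x-x'|\le\frac12|x-y|$. $\ell(\cdot)$ is side length. The cubes $Q$ and $R$ themselves may intersect. *)

theory Defs
  imports "HOL-Analysis.Analysis"
begin

definition CZ_kernel :: "'a::euclidean_space set \<Rightarrow> real \<Rightarrow> real \<Rightarrow> real \<Rightarrow> ('a \<Rightarrow> 'a \<Rightarrow> real) \<Rightarrow> bool" where
  "CZ_kernel X m CCZ \<tau> k \<longleftrightarrow>
     (\<forall>x\<in>X. \<forall>y\<in>X. x \<noteq> y \<longrightarrow> \<bar>k x y\<bar> \<le> CCZ * dist x y powr (-m)) \<and>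
     (\<forall>x\<in>X. \<forall>x'\<in>X. \<forall>y\<in>X. x \<noteq> y \<longrightarrow> dist x x' \<le> dist x y / 2 \<longrightarrow>
        \<bar>k y x - k y x'\<bar> + \<bar>k x y - k x' y\<bar> \<le> CCZ * dist x x' powr \<tau> / dist x y powr (m + \<tau>))"

definition L2 :: "'a measure \<Rightarrow> ('a \<Rightarrow> real) \<Rightarrow> bool" where
  "L2 M f \<longleftrightarrow> f \<in> borel_measurable M \<and> integrable M (\<lambda>x. (f x)\<^sup>2)"

definition L2norm :: "'a measure \<Rightarrow> ('a \<Rightarrow> real) \<Rightarrow> real" where
  "L2norm M f = sqrt (\<integral>x. (f x)\<^sup>2 \<partial>M)"

definition bounded_L2_op :: "'a measure \<Rightarrow> (('a \<Rightarrow> real) \<Rightarrow> ('a \<Rightarrow> real)) \<Rightarrow> bool" where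
  "bounded_L2_op M T \<longleftrightarrow>
     (\<forall>f. L2 M f \<longrightarrow> L2 M (T f)) \<and>
     (\<forall>f g. L2 M f \<longrightarrow> L2 M g \<longrightarrow> (AE x in M. T (\<lambda>y. f y + g y) x = T f x + T g x)) \<and>
     (\<forall>c f. L2 M f \<longrightarrow> (AE x in M. T (\<lambda>y. c * f y) x = c * T f x)) \<and>
     (\<exists>B. \<forall>f. L2 M f \<longrightarrow> L2norm M (T f) \<le> B * L2norm M f)"

text \<open>Support of f as an element of L^2(mu): support of the measure f d mu.\<close>
definition ess_supp :: "'a::metric_space measure \<Rightarrow> ('a \<Rightarrow> real) \<Rightarrow> 'a set" where
  "ess_supp M f = {x. \<forall>e>0. \<not> (AE y in M. y \<in> ball x e \<longrightarrow> f y = 0)}"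

definition kernel_rep :: "'a::metric_space measure \<Rightarrow> ('a \<Rightarrow> 'a \<Rightarrow> real) \<Rightarrow> (('a \<Rightarrow> real) \<Rightarrow> ('a \<Rightarrow> real)) \<Rightarrow> bool" where
  "kernel_rep M k T \<longleftrightarrow>
     (\<forall>f. L2 M f \<longrightarrow> (AE x in M. x \<notin> ess_supp M f \<longrightarrow> T f x = (\<integral>y. k x y * f y \<partial>M)))"

text \<open>Q is a (Borel) axis-parallel cube of side length l > 0; any choice of faces
  between the open and the closed cube is allowed.\<close>
definition is_cube :: "'a::euclidean_space set \<Rightarrow> real \<Rightarrow> bool" where
  "is_cube Q l \<longleftrightarrow> l > 0 \<and> Q \<in> sets borel \<and>
     (\<exists>a. box a (a + l *\<^sub>R One) \<subseteq> Q \<and> Q \<subseteq> cbox a (a + l *\<^sub>R One))"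

end

theory Submission
  imports Defs
begin

text \<open>
  Put delta = l(Q)^alpha l(R)^(1-alpha); the choice of alpha makes delta^(m+tau) equal to
  l(Q)^(tau/2) l(R)^(m+tau/2). Every point of Q is at distance at least delta from the
  support of psi, so on Q the function T psi is the kernel integral, and for fixed x0 in Q
  the difference T psi(x) - T psi(x0) is the integral of (k(x,y) - k(x0,y)) psi(y). The
  kernel difference is bounded by the smoothness estimate when |x - x0| <= |x - y|/2, and
  otherwise (then |x - y| < 2 diam Q) by the size estimate at distance delta; both bounds are
  of order l(Q)^(tau/2) l(R)^(tau/2) / D(Q,R)^(m+tau). Since phi has mean zero, the constant
  T psi(x0) may be subtracted inside the pairing, and Cauchy--Schwarz on Q and on R turns the
  two L1 norms into sqrt(mu(Q)) ||phi|| and sqrt(mu(R)) ||psi||.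
\<close>

section \<open>Scale estimates\<close>

definition cz_separation :: "real \<Rightarrow> real \<Rightarrow> real \<Rightarrow> real \<Rightarrow> real" where
  "cz_separation \<tau> m lQ lR = lQ powr (\<tau> / (2 * (\<tau> + m))) * lR powr (1 - \<tau> / (2 * (\<tau> + m)))"

definition cz_decay :: "real \<Rightarrow> real \<Rightarrow> real \<Rightarrow> real \<Rightarrow> real \<Rightarrow> real" where
  "cz_decay \<tau> m lQ lR s = lQ powr (\<tau>/2) * lR powr (\<tau>/2) / (lQ + lR + s) powr (m + \<tau>)"

lemma cz_separation_pos: "lQ > 0 \<Longrightarrow> lR > 0 \<Longrightarrow> cz_separation \<tau> m lQ lR > 0"
  by (simp add: cz_separation_def)

lemma cz_decay_nonneg: "cz_decay \<tau> m lQ lR s \<ge> 0"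
  by (simp add: cz_decay_def)

lemma cz_separation_powr:
  assumes "lQ > 0" "lR > 0" "\<tau> > 0" "m > 0"
  shows "cz_separation \<tau> m lQ lR powr (m + \<tau>) = lQ powr (\<tau>/2) * lR powr (m + \<tau>/2)"
proof -
  have e1: "\<tau> / (2 * (\<tau> + m)) * (m + \<tau>) = \<tau>/2"
    and e2: "(1 - \<tau> / (2 * (\<tau> + m))) * (m + \<tau>) = m + \<tau>/2"
    using assms by (simp_all add: field_simps)
  show ?thesis
    using assms unfolding cz_separation_def by (simp only: powr_mult powr_powr e1 e2)
qed

lemma cz_decay_le_separation:
  assumes "lQ > 0" "lQ \<le> lR" "\<tau> > 0" "m > 0" "0 \<le> s" "s \<le> \<rho>" "cz_separation \<tau> m lQ lR \<le> \<rho>"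
  shows "lQ powr \<tau> / \<rho> powr (m + \<tau>) \<le> 3 powr (m + \<tau>) * cz_decay \<tau> m lQ lR s"
proof -
  define p where "p = m + \<tau>"
  define L where "L = max s lR"
  have lR: "lR > 0" and p: "p > 0" and L: "L > 0"
    using assms by (auto simp: p_def L_def)
  have \<rho>: "\<rho> > 0"
    using assms cz_separation_pos[of lQ lR \<tau> m] lR by linarith
  have scale: "lQ powr (\<tau>/2) * L powr p \<le> \<rho> powr p * lR powr (\<tau>/2)"
  proof (cases "s \<le> lR")
    case True
    have "lQ powr (\<tau>/2) * lR powr p = cz_separation \<tau> m lQ lR powr p * lR powr (\<tau>/2)"
      using cz_separation_powr[of lQ lR \<tau> m] assms lR
      by (simp add: p_def mult.assoc powr_add[symmetric] add.commute)
    also have "\<dots> \<le> \<rho> powr p * lR powr (\<tau>/2)"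
      using assms p cz_separation_pos[of lQ lR \<tau> m] lR
      by (intro mult_right_mono powr_mono2) auto
    finally show ?thesis using True by (simp add: L_def)
  next
    case False
    have "lQ powr (\<tau>/2) * s powr p \<le> lR powr (\<tau>/2) * \<rho> powr p"
      using assms p by (intro mult_mono powr_mono2) auto
    then show ?thesis using False by (simp add: L_def mult.commute)
  qed
  have "(lQ + lR + s) powr p \<le> (3 * L) powr p"
    using assms p by (intro powr_mono2) (auto simp: L_def)
  then have "(lQ + lR + s) powr p \<le> 3 powr p * L powr p"
    using L by (simp add: powr_mult)
  then have "lQ powr \<tau> * (lQ + lR + s) powr p \<le> lQ powr \<tau> * (3 powr p * L powr p)"
    by (simp add: mult_left_mono)
  also have "\<dots> = 3 powr p * lQ powr (\<tau>/2) * (lQ powr (\<tau>/2) * L powr p)"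
    by (simp add: powr_add[symmetric] mult_ac)
  also have "\<dots> \<le> 3 powr p * lQ powr (\<tau>/2) * (\<rho> powr p * lR powr (\<tau>/2))"
    using scale by (intro mult_left_mono) auto
  finally show ?thesis
    using assms lR \<rho> by (simp add: cz_decay_def p_def field_simps)
qed

lemma cz_separation_powr_neg_le_decay:
  assumes "lQ > 0" "lQ \<le> lR" "\<tau> > 0" "m > 0" "0 \<le> s" "c > 0"
    and "s \<le> c * lQ" "cz_separation \<tau> m lQ lR \<le> c * lQ"
  shows "cz_separation \<tau> m lQ lR powr (-m) \<le> (2 + c) powr (m + \<tau>) * c powr \<tau> * cz_decay \<tau> m lQ lR s"
proof -
  define \<delta> where "\<delta> = cz_separation \<tau> m lQ lR"
  define p where "p = m + \<tau>"
  have lR: "lR > 0" and p: "p > 0" using assms by (auto simp: p_def)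
  have \<delta>: "\<delta> > 0" using cz_separation_pos assms lR by (simp add: \<delta>_def)
  have "lR powr p * lQ powr (\<tau>/2) = \<delta> powr m * \<delta> powr \<tau> * lR powr (\<tau>/2)"
    using cz_separation_powr[of lQ lR \<tau> m] assms lR
    by (simp add: \<delta>_def p_def powr_add[symmetric] mult_ac add_ac)
  also have "\<dots> \<le> \<delta> powr m * (c * lQ) powr \<tau> * lR powr (\<tau>/2)"
    using assms \<delta> by (intro mult_right_mono mult_left_mono powr_mono2) (auto simp: \<delta>_def)
  also have "\<dots> = (\<delta> powr m * c powr \<tau> * lQ powr (\<tau>/2) * lR powr (\<tau>/2)) * lQ powr (\<tau>/2)"
    using assms by (simp add: powr_mult powr_add[symmetric] mult_ac)
  finally have lR_p: "lR powr p \<le> \<delta> powr m * c powr \<tau> * lQ powr (\<tau>/2) * lR powr (\<tau>/2)"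
    using assms by (simp add: mult_ac)
  have "c * lQ \<le> c * lR"
    using assms by simp
  then have "lQ + lR + s \<le> (2 + c) * lR"
    using assms unfolding distrib_right by linarith
  then have "(lQ + lR + s) powr p \<le> ((2 + c) * lR) powr p"
    using assms p by (intro powr_mono2) auto
  also have "\<dots> = (2 + c) powr p * lR powr p"
    using assms lR by (simp add: powr_mult)
  also have "\<dots> \<le> (2 + c) powr p * (\<delta> powr m * c powr \<tau> * lQ powr (\<tau>/2) * lR powr (\<tau>/2))"
    using lR_p by (intro mult_left_mono) auto
  finally have "(lQ + lR + s) powr p \<le> \<delta> powr m * ((2 + c) powr p * c powr \<tau> * lQ powr (\<tau>/2) * lR powr (\<tau>/2))"
    by (simp add: mult_ac)
  then show ?thesis
    unfolding p_def using assms lR \<delta>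
    by (simp add: \<delta>_def[symmetric] cz_decay_def powr_minus field_simps)
qed

section \<open>Pointwise kernel estimates\<close>

text \<open>The first summand comes from the smoothness estimate, the second from the size estimate
  applied at both x and x0; d bounds the diameter of a cube of unit side.\<close>
definition cz_constant :: "real \<Rightarrow> real \<Rightarrow> real \<Rightarrow> real \<Rightarrow> real" where
  "cz_constant CCZ \<tau> m d = CCZ * (d powr \<tau> * 3 powr (m + \<tau>) + 2 * (2 + 2 * d) powr (m + \<tau>) * (2 * d) powr \<tau>)"

lemma cz_constant_pos: "CCZ > 0 \<Longrightarrow> d > 0 \<Longrightarrow> cz_constant CCZ \<tau> m d > 0"
  unfolding cz_constant_def by (intro mult_pos_pos add_pos_nonneg) auto

lemma CZ_kernel_diff_le:
  assumes cz: "CZ_kernel X m CCZ \<tau> k"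
    and "lQ > 0" "lQ \<le> lR" "\<tau> > 0" "m > 0" "0 \<le> s" "d > 0" "CCZ > 0"
    and X: "x \<in> X" "x0 \<in> X" "y \<in> X"
    and sep: "cz_separation \<tau> m lQ lR \<le> dist x y" "cz_separation \<tau> m lQ lR \<le> dist x0 y"
    and "s \<le> dist x y" and x0: "dist x x0 \<le> d * lQ"
  shows "\<bar>k x y - k x0 y\<bar> \<le> cz_constant CCZ \<tau> m d * cz_decay \<tau> m lQ lR s"
proof -
  define \<delta> where "\<delta> = cz_separation \<tau> m lQ lR"
  define A where "A = cz_decay \<tau> m lQ lR s"
  have \<delta>: "\<delta> > 0" using assms cz_separation_pos[of lQ lR] by (simp add: \<delta>_def)
  have A: "A \<ge> 0" by (simp add: A_def cz_decay_nonneg)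
  have xy: "x \<noteq> y" and x0y: "x0 \<noteq> y" using sep \<delta> by (auto simp: \<delta>_def)
  show ?thesis
  proof (cases "dist x x0 \<le> dist x y / 2")
    case True
    have "\<bar>k y x - k y x0\<bar> + \<bar>k x y - k x0 y\<bar> \<le> CCZ * dist x x0 powr \<tau> / dist x y powr (m + \<tau>)"
      using cz X xy True unfolding CZ_kernel_def by blast
    then have "\<bar>k x y - k x0 y\<bar> \<le> CCZ * dist x x0 powr \<tau> / dist x y powr (m + \<tau>)"
      by simp
    also have "\<dots> \<le> CCZ * (d * lQ) powr \<tau> / dist x y powr (m + \<tau>)"
      using assms by (intro divide_right_mono mult_left_mono powr_mono2) auto
    also have "\<dots> = CCZ * (d powr \<tau> * (lQ powr \<tau> / dist x y powr (m + \<tau>)))"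
      using assms by (simp add: powr_mult)
    also have "\<dots> \<le> CCZ * (d powr \<tau> * (3 powr (m + \<tau>) * A))"
      using cz_decay_le_separation[of lQ lR \<tau> m s "dist x y"] assms
      by (intro mult_left_mono) (auto simp: A_def)
    also have "\<dots> \<le> cz_constant CCZ \<tau> m d * A"
      using assms A by (simp add: cz_constant_def algebra_simps mult_left_mono)
    finally show ?thesis by (simp add: A_def)
  next
    case False
    have size: "\<bar>k z y\<bar> \<le> CCZ * \<delta> powr (-m)" if "z \<in> X" "\<delta> \<le> dist z y" for z
    proof -
      have "z \<noteq> y"
        using that \<delta> by auto
      then have "\<bar>k z y\<bar> \<le> CCZ * dist z y powr (-m)"
        using cz that X unfolding CZ_kernel_def by blast
      also have "\<dots> \<le> CCZ * \<delta> powr (-m)"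
        using that \<delta> assms by (intro mult_left_mono powr_mono2') auto
      finally show ?thesis .
    qed
    have "\<bar>k x y - k x0 y\<bar> \<le> 2 * (CCZ * \<delta> powr (-m))"
      using size[of x] size[of x0] X sep by (simp add: \<delta>_def)
    also have "\<dots> \<le> 2 * (CCZ * ((2 + 2 * d) powr (m + \<tau>) * (2 * d) powr \<tau> * A))"
      using False x0 sep assms
      by (intro mult_left_mono cz_separation_powr_neg_le_decay[of lQ lR \<tau> m s "2 * d", folded \<delta>_def A_def])
        (auto simp: \<delta>_def)
    also have "\<dots> \<le> cz_constant CCZ \<tau> m d * A"
      using assms A by (simp add: cz_constant_def algebra_simps mult_left_mono)
    finally show ?thesis by (simp add: A_def)
  qed
qed

section \<open>Square-integrable functions and bounded operators\<close>

lemma L2_integrable: "finite_measure M \<Longrightarrow> L2 M f \<Longrightarrow> integrable M f"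
  unfolding L2_def by (blast intro: finite_measure.square_integrable_imp_integrable)

lemma L2_mult_integrable:
  assumes "L2 M f" "L2 M g"
  shows "integrable M (\<lambda>x. f x * g x)"
proof (rule Bochner_Integration.integrable_bound)
  show "integrable M (\<lambda>x. (f x)\<^sup>2 + (g x)\<^sup>2)" "(\<lambda>x. f x * g x) \<in> borel_measurable M"
    using assms unfolding L2_def by auto
  have "\<bar>a * b\<bar> \<le> a\<^sup>2 + b\<^sup>2" for a b :: real
  proof -
    have "2 * \<bar>a\<bar> * \<bar>b\<bar> \<le> a\<^sup>2 + b\<^sup>2"
      using sum_squares_bound[of "\<bar>a\<bar>" "\<bar>b\<bar>"] by simp
    moreover have "0 \<le> \<bar>a\<bar> * \<bar>b\<bar>"
      by simp
    ultimately show ?thesis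
      unfolding abs_mult by linarith
  qed
  then show "AE x in M. norm (f x * g x) \<le> norm ((f x)\<^sup>2 + (g x)\<^sup>2)"
    by simp
qed

lemma L2_Cauchy_Schwarz:
  assumes f: "L2 M f" and g: "L2 M g"
  shows "(\<integral>x. \<bar>f x * g x\<bar> \<partial>M) \<le> L2norm M f * L2norm M g"
proof -
  have [measurable]: "f \<in> borel_measurable M" "g \<in> borel_measurable M"
    and int: "integrable M (\<lambda>x. (f x)\<^sup>2)" "integrable M (\<lambda>x. (g x)\<^sup>2)"
    using f g unfolding L2_def by auto
  have sq: "(\<integral>\<^sup>+x. ennreal \<bar>h x\<bar> ^ 2 \<partial>M) = ennreal (\<integral>x. (h x)\<^sup>2 \<partial>M)"
    if "integrable M (\<lambda>x. (h x)\<^sup>2)" for h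
    using that by (simp add: ennreal_power nn_integral_eq_integral[symmetric])
  have "ennreal (\<integral>x. \<bar>f x * g x\<bar> \<partial>M) = (\<integral>\<^sup>+x. ennreal \<bar>f x * g x\<bar> \<partial>M)"
    using L2_mult_integrable[OF f g] by (intro nn_integral_eq_integral[symmetric]) auto
  then have "ennreal ((\<integral>x. \<bar>f x * g x\<bar> \<partial>M)\<^sup>2) = (\<integral>\<^sup>+x. ennreal \<bar>f x\<bar> * ennreal \<bar>g x\<bar> \<partial>M)\<^sup>2"
    by (simp add: ennreal_power[symmetric] abs_mult ennreal_mult)
  also have "\<dots> \<le> (\<integral>\<^sup>+x. ennreal \<bar>f x\<bar> ^ 2 \<partial>M) * (\<integral>\<^sup>+x. ennreal \<bar>g x\<bar> ^ 2 \<partial>M)"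
    by (rule Cauchy_Schwarz_nn_integral) auto
  also have "\<dots> = ennreal ((\<integral>x. (f x)\<^sup>2 \<partial>M) * (\<integral>x. (g x)\<^sup>2 \<partial>M))"
    using int by (simp add: sq ennreal_mult)
  finally have "(\<integral>x. \<bar>f x * g x\<bar> \<partial>M)\<^sup>2 \<le> (\<integral>x. (f x)\<^sup>2 \<partial>M) * (\<integral>x. (g x)\<^sup>2 \<partial>M)"
    by (simp add: ennreal_le_iff)
  then show ?thesis
    unfolding L2norm_def by (simp add: real_le_rsqrt real_sqrt_mult[symmetric])
qed

lemma L2_indicator:
  assumes "finite_measure M" "A \<in> sets M"
  shows "L2 M (indicator A)" "L2norm M (indicator A) = sqrt (measure M A)"
proof -
  have "integrable M (indicator A :: _ \<Rightarrow> real)"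
    using assms finite_measure.emeasure_finite[of M A]
    by (intro integrable_real_indicator) (auto simp: less_top)
  moreover have "(\<lambda>x. (indicator A x :: real)\<^sup>2) = indicator A"
    by (auto simp: indicator_def)
  ultimately show "L2 M (indicator A)" "L2norm M (indicator A) = sqrt (measure M A)"
    using assms by (simp_all add: L2_def L2norm_def)
qed

lemma integral_abs_le_sqrt_measure_L2norm:
  assumes M: "finite_measure M" and f: "L2 M f" and A: "A \<in> sets M"
    and vanish: "AE x in M. x \<notin> A \<longrightarrow> f x = 0"
  shows "(\<integral>x. \<bar>f x\<bar> \<partial>M) \<le> sqrt (measure M A) * L2norm M f"
proof -
  have "f \<in> borel_measurable M"
    using f by (simp add: L2_def)
  then have "(\<integral>x. \<bar>f x\<bar> \<partial>M) = (\<integral>x. \<bar>indicator A x * f x\<bar> \<partial>M)"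
    using vanish A by (intro integral_cong_AE) (auto simp: indicator_def)
  also have "\<dots> \<le> L2norm M (indicator A) * L2norm M f"
    using L2_indicator[OF M A] f by (intro L2_Cauchy_Schwarz)
  finally show ?thesis
    using L2_indicator[OF M A] by simp
qed

lemma integral_mult_le_of_mean_zero:
  fixes \<phi> g :: "'a \<Rightarrow> real"
  assumes \<phi>: "integrable M \<phi>" "(\<integral>x. \<phi> x \<partial>M) = 0" and \<phi>g: "integrable M (\<lambda>x. \<phi> x * g x)"
    and bound: "AE x in M. \<phi> x \<noteq> 0 \<longrightarrow> \<bar>g x - c\<bar> \<le> B"
  shows "\<bar>\<integral>x. \<phi> x * g x \<partial>M\<bar> \<le> B * (\<integral>x. \<bar>\<phi> x\<bar> \<partial>M)"
proof -
  have \<phi>c: "integrable M (\<lambda>x. \<phi> x * c)"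
    using \<phi>(1) by auto
  then have int: "integrable M (\<lambda>x. \<phi> x * g x - \<phi> x * c)"
    using \<phi>g by (rule Bochner_Integration.integrable_diff[rotated])
  have "(\<integral>x. \<phi> x * g x \<partial>M) = (\<integral>x. \<phi> x * g x - \<phi> x * c \<partial>M)"
    using \<phi> by (simp add: Bochner_Integration.integral_diff[OF \<phi>g \<phi>c])
  also have "\<bar>\<dots>\<bar> \<le> (\<integral>x. \<bar>\<phi> x * g x - \<phi> x * c\<bar> \<partial>M)"
    by simp
  also have "\<dots> \<le> (\<integral>x. B * \<bar>\<phi> x\<bar> \<partial>M)"
  proof (rule integral_mono_AE)
    have "\<bar>\<phi> x * g x - \<phi> x * c\<bar> \<le> B * \<bar>\<phi> x\<bar>" if "\<phi> x \<noteq> 0 \<longrightarrow> \<bar>g x - c\<bar> \<le> B" for x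
    proof (cases "\<phi> x = 0")
      case False
      then have "\<bar>\<phi> x\<bar> * \<bar>g x - c\<bar> \<le> \<bar>\<phi> x\<bar> * B"
        using that by (intro mult_left_mono) auto
      moreover have "\<bar>\<phi> x * g x - \<phi> x * c\<bar> = \<bar>\<phi> x\<bar> * \<bar>g x - c\<bar>"
        by (simp add: abs_mult[symmetric] right_diff_distrib)
      ultimately show ?thesis
        by (simp add: mult.commute)
    qed simp
    then show "AE x in M. \<bar>\<phi> x * g x - \<phi> x * c\<bar> \<le> B * \<bar>\<phi> x\<bar>"
      using bound by (auto elim: AE_mp)
  qed (use int \<phi> in auto)
  finally show ?thesis
    by simp
qed

lemma L2_AE_zero:
  assumes "h \<in> borel_measurable M" "AE x in M. h x = 0"
  shows "L2 M h" "L2norm M h = 0"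
proof -
  have sq: "AE x in M. (h x)\<^sup>2 = 0"
    using assms(2) by eventually_elim simp
  have "integrable M (\<lambda>x. (h x)\<^sup>2)" "(\<integral>x. (h x)\<^sup>2 \<partial>M) = 0"
    using integrable_cong_AE[OF _ _ sq] integral_cong_AE[OF _ _ sq] assms(1) by auto
  then show "L2 M h" "L2norm M h = 0"
    using assms(1) by (simp_all add: L2_def L2norm_def)
qed

lemma bounded_L2_op_AE_zero:
  assumes T: "bounded_L2_op M T" and h: "L2 M h" "L2norm M h = 0"
  shows "AE x in M. T h x = 0"
proof -
  obtain B where "\<And>f. L2 M f \<Longrightarrow> L2norm M (T f) \<le> B * L2norm M f"
    using T unfolding bounded_L2_op_def by blast
  then have "L2norm M (T h) \<le> 0"
    using h by fastforce
  moreover have "0 \<le> (\<integral>x. (T h x)\<^sup>2 \<partial>M)"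
    by (intro integral_nonneg_AE) simp
  ultimately have "(\<integral>x. (T h x)\<^sup>2 \<partial>M) = 0"
    by (simp add: L2norm_def)
  moreover have "integrable M (\<lambda>x. (T h x)\<^sup>2)"
    using T h unfolding bounded_L2_op_def L2_def by blast
  ultimately have "AE x in M. (T h x)\<^sup>2 = 0"
    by (simp add: integral_nonneg_eq_0_iff_AE)
  then show ?thesis
    by eventually_elim simp
qed

lemma bounded_L2_op_cong_AE:
  assumes T: "bounded_L2_op M T" and f: "L2 M f" and g: "L2 M g" and fg: "AE x in M. f x = g x"
  shows "AE x in M. T f x = T g x"
proof -
  define h where "h = (\<lambda>x. g x - f x)"
  have "h \<in> borel_measurable M" "AE x in M. h x = 0"
    using f g fg by (auto simp: h_def L2_def)
  then have h: "L2 M h" "L2norm M h = 0"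
    by (rule L2_AE_zero)+
  have "(\<lambda>x. f x + h x) = g"
    by (simp add: h_def)
  then have "AE x in M. T g x = T f x + T h x"
    using T f h unfolding bounded_L2_op_def by metis
  then show ?thesis
    using bounded_L2_op_AE_zero[OF T h] by eventually_elim simp
qed

section \<open>Essential support\<close>

lemma not_in_ess_supp_if_vanishing_ball:
  assumes "z \<in> ball x e" "AE y in M. y \<in> ball x e \<longrightarrow> f y = 0"
  shows "z \<notin> ess_supp M f"
proof -
  obtain r where "r > 0" "ball z r \<subseteq> ball x e"
    using openE[OF open_ball assms(1)] by blast
  moreover have "AE y in M. y \<in> ball z r \<longrightarrow> f y = 0"
    using assms(2) by eventually_elim (use \<open>ball z r \<subseteq> ball x e\<close> in blast)
  ultimately show ?thesis
    unfolding ess_supp_def by blast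
qed

lemma compl_ess_supp:
  "- ess_supp M f = \<Union>{ball x e |x e. e > 0 \<and> (AE y in M. y \<in> ball x e \<longrightarrow> f y = 0)}"
proof
  show "- ess_supp M f \<subseteq> \<Union>{ball x e |x e. e > 0 \<and> (AE y in M. y \<in> ball x e \<longrightarrow> f y = 0)}"
    unfolding ess_supp_def by force
  show "\<Union>{ball x e |x e. e > 0 \<and> (AE y in M. y \<in> ball x e \<longrightarrow> f y = 0)} \<subseteq> - ess_supp M f"
    using not_in_ess_supp_if_vanishing_ball by blast
qed

lemma closed_ess_supp: "closed (ess_supp M f)"
  unfolding closed_def compl_ess_supp by (intro open_Union) auto

lemma AE_not_in_ess_supp:
  fixes f :: "'a::euclidean_space \<Rightarrow> real"
  shows "AE y in M. y \<notin> ess_supp M f \<longrightarrow> f y = 0"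
proof -
  define F where "F = {ball x e |x e. e > 0 \<and> (AE y in M. y \<in> ball x e \<longrightarrow> f y = 0)}"
  obtain F' where F': "F' \<subseteq> F" "countable F'" "\<Union>F' = \<Union>F"
    using Lindelof[of F] by (auto simp: F_def)
  have cover: "\<Union>F' = - ess_supp M f"
    using F'(3) compl_ess_supp[of M f] by (simp only: F_def)
  have "AE y in M. \<forall>B\<in>F'. y \<in> B \<longrightarrow> f y = 0"
    using F' by (intro AE_ball_countable') (auto simp: F_def)
  then show ?thesis
    by eventually_elim (use cover in blast)
qed

lemma ess_supp_cong_AE:
  assumes "AE y in M. f y = g y"
  shows "ess_supp M f = ess_supp M g"
proof -
  have "(AE y in M. y \<in> ball x e \<longrightarrow> f y = 0) \<longleftrightarrow> (AE y in M. y \<in> ball x e \<longrightarrow> g y = 0)" for x e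
    using assms by (auto elim: AE_mp)
  then show ?thesis
    unfolding ess_supp_def by simp
qed

section \<open>Kernel integrals near a cube\<close>

lemma is_cube_dist_le:
  fixes Q :: "'a::euclidean_space set"
    and l :: real
  assumes "is_cube Q l" "x \<in> Q" "z \<in> Q"
  shows "dist x z \<le> DIM('a) * l"
proof -
  obtain a where a: "Q \<subseteq> cbox a (a + l *\<^sub>R One)"
    using assms unfolding is_cube_def by auto
  have "\<bar>(x - z) \<bullet> b\<bar> \<le> l" if "b \<in> Basis" for b
  proof -
    have "a \<bullet> b \<le> x \<bullet> b \<and> x \<bullet> b \<le> a \<bullet> b + l" "a \<bullet> b \<le> z \<bullet> b \<and> z \<bullet> b \<le> a \<bullet> b + l"
      using a assms that by (auto simp: subset_iff mem_box inner_add_left)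
    then show ?thesis
      by (simp add: inner_diff_left abs_le_iff)
  qed
  then have "(\<Sum>b\<in>Basis. \<bar>(x - z) \<bullet> b\<bar>) \<le> DIM('a) * l"
    using sum_mono[of Basis "\<lambda>b. \<bar>(x - z) \<bullet> b\<bar>" "\<lambda>_. l"] by simp
  then show ?thesis
    using norm_le_l1[of "x - z"] by (simp add: dist_norm)
qed

lemma CZ_kernel_continuous_on:
  assumes cz: "CZ_kernel X m CCZ \<tau> k" and "\<tau> > 0" "S \<subseteq> X" "x \<in> X" "x \<notin> S"
  shows "continuous_on S (k x)"
  unfolding continuous_on_def
proof
  fix y assume y: "y \<in> S"
  define \<rho> where "\<rho> = dist y x"
  have "y \<noteq> x"
    using y assms by auto
  then have "\<rho> > 0"
    by (simp add: \<rho>_def)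
  have "eventually (\<lambda>z. norm (k x z - k x y) \<le> CCZ * dist z y powr \<tau> / \<rho> powr (m + \<tau>)) (at y within S)"
    unfolding eventually_at
  proof (intro exI[of _ "\<rho>/2"] conjI ballI impI)
    show "\<rho>/2 > 0"
      using \<open>\<rho> > 0\<close> by simp
    fix z assume z: "z \<in> S" "z \<noteq> y \<and> dist z y < \<rho>/2"
    have "y \<in> X" "z \<in> X" "y \<noteq> x" "dist y z \<le> dist y x / 2"
      using y z assms by (auto simp: \<rho>_def dist_commute)
    then have "\<bar>k x y - k x z\<bar> + \<bar>k y x - k z x\<bar> \<le> CCZ * dist y z powr \<tau> / dist y x powr (m + \<tau>)"
      using cz \<open>x \<in> X\<close> unfolding CZ_kernel_def by blast
    then show "norm (k x z - k x y) \<le> CCZ * dist z y powr \<tau> / \<rho> powr (m + \<tau>)"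
      by (simp add: \<rho>_def dist_commute abs_minus_commute)
  qed
  moreover have "((\<lambda>z. CCZ * dist z y powr \<tau> / \<rho> powr (m + \<tau>)) \<longlongrightarrow> 0) (at y within S)"
    using assms \<open>\<rho> > 0\<close> by (auto intro!: tendsto_eq_intros tendsto_zero_powrI)
  ultimately have "((\<lambda>z. k x z - k x y) \<longlongrightarrow> 0) (at y within S)"
    by (rule Lim_null_comparison)
  then show "(k x \<longlongrightarrow> k x y) (at y within S)"
    by (rule LIM_zero_cancel)
qed

lemma CZ_kernel_integrable:
  assumes cz: "CZ_kernel X m CCZ \<tau> k" and "0 \<le> CCZ" "0 \<le> m" "\<tau> > 0"
    and M: "sets M = sets borel" and S: "closed S" "S \<subseteq> X" and x: "x \<in> X"
    and \<delta>: "\<delta> > 0" "\<forall>y\<in>S. \<delta> \<le> dist x y" and \<psi>: "integrable M \<psi>"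
  shows "integrable M (\<lambda>y. k x y * (indicator S y * \<psi> y))"
proof (rule Bochner_Integration.integrable_bound)
  show "integrable M (\<lambda>y. CCZ * \<delta> powr (-m) * \<psi> y)"
    using \<psi> by simp
  have "x \<notin> S"
    using \<delta> by fastforce
  then have "(\<lambda>y. indicator S y *\<^sub>R k x y) \<in> borel_measurable borel"
    using S assms by (intro borel_measurable_continuous_on_indicator CZ_kernel_continuous_on) auto
  then have "(\<lambda>y. indicator S y *\<^sub>R k x y * \<psi> y) \<in> borel_measurable M"
    using \<psi> measurable_cong_sets[OF M refl] by (intro borel_measurable_times) auto
  then show "(\<lambda>y. k x y * (indicator S y * \<psi> y)) \<in> borel_measurable M"
    by (simp add: mult_ac)
  have "\<bar>k x y\<bar> \<le> CCZ * \<delta> powr (-m)" if "y \<in> S" for y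
  proof -
    have "x \<noteq> y" "y \<in> X"
      using that S \<delta> by fastforce+
    then have "\<bar>k x y\<bar> \<le> CCZ * dist x y powr (-m)"
      using cz x unfolding CZ_kernel_def by blast
    also have "\<dots> \<le> CCZ * \<delta> powr (-m)"
      using that \<delta> assms by (intro mult_left_mono powr_mono2') auto
    finally show ?thesis .
  qed
  then have "\<bar>k x y * (indicator S y * \<psi> y)\<bar> \<le> CCZ * \<delta> powr (-m) * \<bar>\<psi> y\<bar>" for y
    using \<open>0 \<le> CCZ\<close> by (cases "y \<in> S") (simp_all add: abs_mult mult_right_mono)
  then show "AE y in M. norm (k x y * (indicator S y * \<psi> y)) \<le> norm (CCZ * \<delta> powr (-m) * \<psi> y)"
    using assms by (simp add: abs_mult)
qed

lemma CZ_kernel_integral_oscillation: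
  fixes Q R :: "'a::euclidean_space set"
  assumes cz: "CZ_kernel X m CCZ \<tau> k" and "CCZ > 0" "\<tau> > 0" "m > 0"
    and M: "sets M = sets borel" and S: "closed S" "S \<subseteq> X"
    and Q: "is_cube Q lQ" "lQ \<le> lR"
    and \<psi>: "integrable M \<psi>" "AE y in M. y \<notin> R \<longrightarrow> \<psi> y = 0"
    and x: "x \<in> Q" "x \<in> X" and x0: "x0 \<in> Q" "x0 \<in> X"
    and sep: "\<forall>z\<in>Q. \<forall>y\<in>S. cz_separation \<tau> m lQ lR \<le> dist z y"
  shows "\<bar>(\<integral>y. k x y * (indicator S y * \<psi> y) \<partial>M) - (\<integral>y. k x0 y * (indicator S y * \<psi> y) \<partial>M)\<bar>
    \<le> cz_constant CCZ \<tau> m DIM('a) * cz_decay \<tau> m lQ lR (setdist Q R) * (\<integral>y. \<bar>\<psi> y\<bar> \<partial>M)"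
proof -
  define K where "K = cz_constant CCZ \<tau> m DIM('a) * cz_decay \<tau> m lQ lR (setdist Q R)"
  have lQ: "lQ > 0"
    using Q by (simp add: is_cube_def)
  have "K \<ge> 0"
    using cz_constant_pos[of CCZ "DIM('a)" \<tau> m] cz_decay_nonneg[of \<tau> m lQ lR "setdist Q R"] \<open>CCZ > 0\<close>
    by (simp add: K_def)
  have int: "integrable M (\<lambda>y. k z y * (indicator S y * \<psi> y))" if "z \<in> Q" "z \<in> X" for z
    using that sep assms cz_separation_pos[OF lQ, of lR] lQ
    by (intro CZ_kernel_integrable[OF cz _ _ _ M S that(2), where \<delta> = "cz_separation \<tau> m lQ lR"]) auto
  have bound: "\<bar>k x y - k x0 y\<bar> * \<bar>indicator S y * \<psi> y\<bar> \<le> K * \<bar>\<psi> y\<bar>"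
    if "y \<notin> R \<longrightarrow> \<psi> y = 0" for y
  proof (cases "y \<in> S \<and> y \<in> R")
    case True
    then have "\<bar>k x y - k x0 y\<bar> \<le> K"
      unfolding K_def using assms lQ is_cube_dist_le[OF Q(1) x(1) x0(1)]
      by (intro CZ_kernel_diff_le[OF cz]) (auto intro: setdist_le_dist)
    then show ?thesis
      using True by (simp add: abs_mult mult_right_mono)
  qed (use that \<open>K \<ge> 0\<close> in auto)
  have pointwise: "AE y in M. \<bar>k x y * (indicator S y * \<psi> y) - k x0 y * (indicator S y * \<psi> y)\<bar>
      \<le> K * \<bar>\<psi> y\<bar>"
    using \<psi>(2) by eventually_elim (use bound in \<open>simp add: left_diff_distrib[symmetric] abs_mult\<close>)
  have "\<bar>(\<integral>y. k x y * (indicator S y * \<psi> y) \<partial>M) - (\<integral>y. k x0 y * (indicator S y * \<psi> y) \<partial>M)\<bar>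
      = \<bar>\<integral>y. k x y * (indicator S y * \<psi> y) - k x0 y * (indicator S y * \<psi> y) \<partial>M\<bar>"
    using int[OF x] int[OF x0] by simp
  also have "\<dots> \<le> (\<integral>y. \<bar>k x y * (indicator S y * \<psi> y) - k x0 y * (indicator S y * \<psi> y)\<bar> \<partial>M)"
    by simp
  also have "\<dots> \<le> (\<integral>y. K * \<bar>\<psi> y\<bar> \<partial>M)"
    using int[OF x] int[OF x0] \<psi>(1) pointwise by (intro integral_mono_AE) auto
  finally show ?thesis
    by (simp add: K_def)
qed

lemma CZ_operator_nearly_constant_on_cube:
  fixes Q R :: "'a::euclidean_space set" and M :: "'a measure"
  assumes cz: "CZ_kernel X m CCZ \<tau> k" and "CCZ > 0" "\<tau> > 0" "m > 0"
    and X: "closed X" "AE x in M. x \<in> X"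
    and M: "sets M = sets borel" "finite_measure M"
    and T: "bounded_L2_op M T" "kernel_rep M k T"
    and Q: "is_cube Q lQ" "lQ \<le> lR"
    and \<psi>: "L2 M \<psi>" "AE y in M. y \<notin> R \<longrightarrow> \<psi> y = 0"
    and sep: "\<forall>z\<in>Q. \<forall>y\<in>ess_supp M \<psi>. cz_separation \<tau> m lQ lR \<le> dist z y"
  shows "\<exists>c. AE x in M. x \<in> Q \<longrightarrow>
    \<bar>T \<psi> x - c\<bar> \<le> cz_constant CCZ \<tau> m DIM('a) * cz_decay \<tau> m lQ lR (setdist Q R) * (\<integral>y. \<bar>\<psi> y\<bar> \<partial>M)"
proof (cases "Q \<inter> X = {}")
  case True
  have "AE x in M. x \<notin> Q"
    using X(2) by eventually_elim (use True in blast)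
  then show ?thesis
    by (intro exI) (auto elim: eventually_mono)
next
  case False
  then obtain x0 where x0: "x0 \<in> Q" "x0 \<in> X"
    by blast
  define E where "E = ess_supp M \<psi>"
  define S where "S = X \<inter> E"
  \<comment> \<open>\<open>\<psi>'\<close> equals \<open>\<psi>\<close> a.e., but lives on \<open>X\<close>, where the kernel estimates hold.\<close>
  define \<psi>' where "\<psi>' = (\<lambda>y. indicator S y * \<psi> y)"
  have lQ: "lQ > 0"
    using Q by (simp add: is_cube_def)
  have "cz_separation \<tau> m lQ lR > 0"
    using cz_separation_pos[OF lQ] lQ Q(2) by simp
  then have Q_off_E: "x \<notin> E" if "x \<in> Q" for x
    using sep that by (fastforce simp: E_def)
  have "closed S"
    using X closed_ess_supp by (auto simp: S_def E_def)
  have \<psi>\<psi>': "AE y in M. \<psi> y = \<psi>' y"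
    using AE_not_in_ess_supp[of M \<psi>] X(2) by eventually_elim (auto simp: \<psi>'_def S_def E_def)
  have "\<psi> \<in> borel_measurable M"
    using \<psi> by (simp add: L2_def)
  moreover have "S \<in> sets M"
    using \<open>closed S\<close> M(1) by simp
  ultimately have "\<psi>' \<in> borel_measurable M"
    unfolding \<psi>'_def by (intro borel_measurable_times borel_measurable_indicator)
  moreover have "AE y in M. (\<psi> y)\<^sup>2 = (\<psi>' y)\<^sup>2"
    using \<psi>\<psi>' by eventually_elim simp
  ultimately have L2\<psi>': "L2 M \<psi>'"
    using \<psi>(1) by (auto simp: L2_def intro: integrable_cong_AE_imp)
  have "ess_supp M \<psi>' = E"
    using ess_supp_cong_AE[OF \<psi>\<psi>'] by (simp add: E_def)
  then have "AE x in M. x \<notin> E \<longrightarrow> T \<psi>' x = (\<integral>y. k x y * \<psi>' y \<partial>M)"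
    using T(2) L2\<psi>' unfolding kernel_rep_def by blast
  moreover have "AE x in M. T \<psi> x = T \<psi>' x"
    by (rule bounded_L2_op_cong_AE[OF T(1) \<psi>(1) L2\<psi>' \<psi>\<psi>'])
  ultimately have "AE x in M. x \<notin> E \<longrightarrow> T \<psi> x = (\<integral>y. k x y * \<psi>' y \<partial>M)"
    by eventually_elim simp
  moreover have "\<bar>(\<integral>y. k x y * \<psi>' y \<partial>M) - (\<integral>y. k x0 y * \<psi>' y \<partial>M)\<bar>
    \<le> cz_constant CCZ \<tau> m DIM('a) * cz_decay \<tau> m lQ lR (setdist Q R) * (\<integral>y. \<bar>\<psi> y\<bar> \<partial>M)"
    if "x \<in> Q" "x \<in> X" for x
    unfolding \<psi>'_def using assms \<open>closed S\<close> that x0 L2_integrable[OF M(2) \<psi>(1)]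
    by (intro CZ_kernel_integral_oscillation[OF cz]) (auto simp: S_def E_def)
  ultimately show ?thesis
    using X(2) Q_off_E by (intro exI[of _ "\<integral>y. k x0 y * \<psi>' y \<partial>M"]) (auto elim: AE_mp)
qed

lemma CZ_pairing_bound:
  fixes Q R :: "'a::euclidean_space set" and M :: "'a measure"
  assumes cz: "CZ_kernel X m CCZ \<tau> k" and "CCZ > 0" "\<tau> > 0" "m > 0"
    and X: "closed X" "emeasure M (UNIV - X) = 0"
    and M: "sets M = sets borel" "finite_measure M"
    and T: "bounded_L2_op M T" "kernel_rep M k T"
    and cubes: "is_cube Q lQ" "is_cube R lR" "lQ \<le> lR"
    and \<phi>: "L2 M \<phi>" "AE x in M. x \<notin> Q \<longrightarrow> \<phi> x = 0" "(\<integral>x. \<phi> x \<partial>M) = 0"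
    and \<psi>: "L2 M \<psi>" "AE y in M. y \<notin> R \<longrightarrow> \<psi> y = 0"
    and sep: "ess_supp M \<psi> = {} \<or> cz_separation \<tau> m lQ lR \<le> setdist Q (ess_supp M \<psi>)"
  shows "\<bar>\<integral>x. \<phi> x * T \<psi> x \<partial>M\<bar> \<le> cz_constant CCZ \<tau> m DIM('a) * cz_decay \<tau> m lQ lR (setdist Q R)
    * sqrt (measure M Q) * sqrt (measure M R) * L2norm M \<phi> * L2norm M \<psi>"
proof -
  define K where "K = cz_constant CCZ \<tau> m DIM('a) * cz_decay \<tau> m lQ lR (setdist Q R)"
  have "K \<ge> 0"
    using cz_constant_pos[of CCZ "DIM('a)" \<tau> m] cz_decay_nonneg \<open>CCZ > 0\<close> by (simp add: K_def)
  have "AE x in M. x \<in> X"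
    using X M(1) by (intro AE_I'[of "UNIV - X"]) (auto simp: null_sets_def)
  moreover have "\<forall>z\<in>Q. \<forall>y\<in>ess_supp M \<psi>. cz_separation \<tau> m lQ lR \<le> dist z y"
    using sep by (auto intro: order_trans setdist_le_dist)
  ultimately obtain c where c: "AE x in M. x \<in> Q \<longrightarrow> \<bar>T \<psi> x - c\<bar> \<le> K * (\<integral>y. \<bar>\<psi> y\<bar> \<partial>M)"
    using CZ_operator_nearly_constant_on_cube[OF cz] assms unfolding K_def by blast
  have "L2 M (T \<psi>)"
    using T(1) \<psi>(1) by (simp add: bounded_L2_op_def)
  moreover have "AE x in M. \<phi> x \<noteq> 0 \<longrightarrow> \<bar>T \<psi> x - c\<bar> \<le> K * (\<integral>y. \<bar>\<psi> y\<bar> \<partial>M)"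
    using c \<phi>(2) by eventually_elim blast
  ultimately have "\<bar>\<integral>x. \<phi> x * T \<psi> x \<partial>M\<bar> \<le> K * (\<integral>y. \<bar>\<psi> y\<bar> \<partial>M) * (\<integral>x. \<bar>\<phi> x\<bar> \<partial>M)"
    using L2_integrable[OF M(2) \<phi>(1)] \<phi>(3) L2_mult_integrable[OF \<phi>(1)]
    by (intro integral_mult_le_of_mean_zero) auto
  also have "\<dots> \<le> K * (sqrt (measure M R) * L2norm M \<psi>) * (sqrt (measure M Q) * L2norm M \<phi>)"
    using \<open>K \<ge> 0\<close> cubes M \<phi> \<psi>
    by (intro mult_mono mult_left_mono integral_abs_le_sqrt_measure_L2norm)
      (auto simp: is_cube_def L2norm_def)
  finally show ?thesis
    by (simp add: K_def mult_ac)
qed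

theorem lemma20:
  fixes CCZ \<tau> m :: real
  assumes "CCZ > 0" and "0 < \<tau>" and "\<tau> \<le> 1" and "m > 0"
  shows "\<exists>C>0. \<forall>(X::'a::euclidean_space set) M k T Q R lQ lR \<phi> \<psi>.
     closed X \<and> sets M = sets borel \<and> finite_measure M \<and> emeasure M (UNIV - X) = 0 \<and>
     CZ_kernel X m CCZ \<tau> k \<and> bounded_L2_op M T \<and> kernel_rep M k T \<and>
     is_cube Q lQ \<and> is_cube R lR \<and> lQ \<le> lR \<and>
     L2 M \<phi> \<and> L2 M \<psi> \<and>
     (AE x in M. x \<notin> Q \<longrightarrow> \<phi> x = 0) \<and> (AE x in M. x \<notin> R \<longrightarrow> \<psi> x = 0) \<and>
     (\<integral>x. \<phi> x \<partial>M) = 0 \<and>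
     (ess_supp M \<psi> = {} \<or>
        setdist Q (ess_supp M \<psi>) \<ge> lQ powr (\<tau> / (2 * (\<tau> + m))) * lR powr (1 - \<tau> / (2 * (\<tau> + m))))
     \<longrightarrow> \<bar>\<integral>x. \<phi> x * T \<psi> x \<partial>M\<bar> \<le>
         C * (lQ powr (\<tau>/2) * lR powr (\<tau>/2) / (lQ + lR + setdist Q R) powr (m + \<tau>))
           * sqrt (measure M Q) * sqrt (measure M R) * L2norm M \<phi> * L2norm M \<psi>"
proof (intro exI[of _ "cz_constant CCZ \<tau> m DIM('a)"] conjI allI impI)
  show "cz_constant CCZ \<tau> m DIM('a) > 0"
    using assms by (simp add: cz_constant_pos)
qed (use CZ_pairing_bound[of _ m CCZ \<tau>] assms in \<open>unfold cz_separation_def cz_decay_def, elim conjE, blast\<close>)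

end
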